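(* Let $a\ge b\ge k$ be positive integers. Then, as elements of $\operatorname{Hom}_G(\Lambda^a\otimes\Lambda^b,\Lambda^a\otimes\Lambda^b)$, \[\phi_k=\sum_{t=0}^{k}(-1)^t\binom{b-t}{k-t}\Phi_t\qquad\text{and}\qquad\psi_k=\sum_{t=1}^{k}(-1)^{t-1}\binom{b-t}{k-t}\Phi_t.\]
   Context: $K$ is a field of characteristic zero, $G=GL(n,K)$, $V=K^n$, $\Lambda=\bigoplus_i\Lambda^i$ the exterior algebra of $V$. $m$ is multiplication and $\Delta_{s,t}:\Lambda^{s+t}\to\Lambda^s\otimes\Lambda^t$ the comultiplication component $v_1\cdots v_{s+t}\mapsto\sum_\sigma\mathrm{sgn}(\sigma)v_{\sigma(1)}\cdots v_{\sigma(s)}\otimes v_{\sigma(s+1)}\cdots v_{\sigma(s+t)}$ (permutations increasing on the first $s$ and last $t$ positions). For $0\le t\le b$: $\delta_t=(m\otimes1)\circ(1\otimes\Delta_{t,b-t}):\Lambda^a\otimes\Lambda^b\to\Lambda^{a+t}\otimes\Lambda^{b-t}$, $\theta_t=(1\otimes m)\circ(\Delta_{a,t}\otimes1):\Lambda^{a+t}\otimes\Lambda^{b-t}\to\Lambda^a\otimes\Lambda^b$, $\Phi_t=\theta_t\circ\delta_t$. $\phi_k$ is the composition $(m\otimes m)\circ(1\otimes\tau\otimes1)\circ(\Delta_{a-k,k}\otimes\Delta_{k,b-k}):\Lambda^a\otimes\Lambda^b\to\Lambda^a\otimes\Lambda^b$, where $\tau:\Lambda^k\otimes\Lambda^k\to\Lambda^k\otimes\Lambda^k$,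 $w\otimes z\mapsto z\otimes w$; and $\psi_k=\binom{b}{k}1_{\Lambda^a\otimes\Lambda^b}-\phi_k$. *)

theory Defs
  imports Main
begin

text \<open>Exterior algebra of V = K^n with standard basis e_0,...,e_(n-1).
  A basis of the exterior algebra is e_S = e_(s1) ... e_(sr) (s1 < ... < sr) for S a subset of {..<n}.
  Elements of Lambda are coefficient functions  nat set => 'a, elements of Lambda (x) Lambda are
  curried coefficient functions nat set => nat set => 'a, and so on for higher tensor powers.\<close>

text \<open>Sign of e_S e_T = wsgn S T * e_(S union T).\<close>
definition wsgn :: "nat set \<Rightarrow> nat set \<Rightarrow> 'a::field" where
  "wsgn S T = (if S \<inter> T = {} then (-1) ^ card {(i, j). i \<in> S \<and> j \<in> T \<and> j < i} else 0)"

definition mult :: "nat \<Rightarrow> (nat set \<Rightarrow> nat set \<Rightarrow> 'a::field) \<Rightarrow> nat set \<Rightarrow> 'a" where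
  "mult n z U = (\<Sum>S\<in>Pow {..<n}. \<Sum>T\<in>Pow {..<n}.
                   (if S \<union> T = U then wsgn S T * z S T else 0))"

definition comult :: "nat \<Rightarrow> nat \<Rightarrow> nat \<Rightarrow> (nat set \<Rightarrow> 'a::field) \<Rightarrow> nat set \<Rightarrow> nat set \<Rightarrow> 'a" where
  "comult n s t v S T = (if card S = s \<and> card T = t then wsgn S T * v (S \<union> T) else 0)"

text \<open>delta_t = (m (x) 1) o (1 (x) Delta_(t,b-t)).\<close>
definition delta :: "nat \<Rightarrow> nat \<Rightarrow> nat \<Rightarrow> nat \<Rightarrow> (nat set \<Rightarrow> nat set \<Rightarrow> 'a::field) \<Rightarrow> nat set \<Rightarrow> nat set \<Rightarrow> 'a" where
  "delta n a b t x = (\<lambda>U W. mult n (\<lambda>S A. comult n t (b - t) (x S) A W) U)"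

text \<open>theta_t = (1 (x) m) o (Delta_(a,t) (x) 1).\<close>
definition theta :: "nat \<Rightarrow> nat \<Rightarrow> nat \<Rightarrow> nat \<Rightarrow> (nat set \<Rightarrow> nat set \<Rightarrow> 'a::field) \<Rightarrow> nat set \<Rightarrow> nat set \<Rightarrow> 'a" where
  "theta n a b t y = (\<lambda>S V. mult n (\<lambda>A W. comult n a t (\<lambda>U. y U W) S A) V)"

definition Phi :: "nat \<Rightarrow> nat \<Rightarrow> nat \<Rightarrow> nat \<Rightarrow> (nat set \<Rightarrow> nat set \<Rightarrow> 'a::field) \<Rightarrow> nat set \<Rightarrow> nat set \<Rightarrow> 'a" where
  "Phi n a b t x = theta n a b t (delta n a b t x)"

text \<open>phi_k = (m (x) m) o (1 (x) tau (x) 1) o (Delta_(a-k,k) (x) Delta_(k,b-k)).\<close>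
definition phi :: "nat \<Rightarrow> nat \<Rightarrow> nat \<Rightarrow> nat \<Rightarrow> (nat set \<Rightarrow> nat set \<Rightarrow> 'a::field) \<Rightarrow> nat set \<Rightarrow> nat set \<Rightarrow> 'a" where
  "phi n a b k x = (\<lambda>U V.
     mult n (\<lambda>S1 A. mult n (\<lambda>S2 B.
        comult n (a - k) k (\<lambda>S. comult n k (b - k) (x S) A B) S1 S2) V) U)"

definition psi :: "nat \<Rightarrow> nat \<Rightarrow> nat \<Rightarrow> nat \<Rightarrow> (nat set \<Rightarrow> nat set \<Rightarrow> 'a::field) \<Rightarrow> nat set \<Rightarrow> nat set \<Rightarrow> 'a" where
  "psi n a b k x = (\<lambda>U V. of_nat (b choose k) * x U V - phi n a b k x U V)"

definition in_tensor :: "nat \<Rightarrow> nat \<Rightarrow> nat \<Rightarrow> (nat set \<Rightarrow> nat set \<Rightarrow> 'a::zero) \<Rightarrow> bool" where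
  "in_tensor n a b x \<longleftrightarrow> (\<forall>S T. x S T \<noteq> 0 \<longrightarrow>
      S \<subseteq> {..<n} \<and> T \<subseteq> {..<n} \<and> card S = a \<and> card T = b)"

end

theory Submission
  imports Defs
begin

text \<open>
  Both sides are compared entry by entry in the basis e_S \<otimes> e_T of \<open>\<Lambda>\<^sup>a \<otimes> \<Lambda>\<^sup>b\<close>. The
  coefficient of e_U \<otimes> e_V in the image of e_S \<otimes> e_T vanishes unless S \<union> T = U \<union> V and
  S \<inter> T = U \<inter> V. Then S \<union> T is the disjoint union of S - V, S - U, T - V, T - U and S \<inter> T;
  with m = |S - U|, the terms contributing to \<open>\<phi>\<^sub>k\<close> are indexed by the subsets of S \<inter> T of
  size k - m, those contributing to \<open>\<Phi>\<^sub>t\<close> by the subsets of T - U of size t - m, and all of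
  them carry the same sign \<open>\<epsilon>\<close> (times (-1)^m for \<open>\<Phi>\<^sub>t\<close>). So the coefficients are
  \<open>\<epsilon>\<close> C(|S \<inter> T|, k - m) and (-1)^m \<open>\<epsilon>\<close> C(|T - U|, t - m), and the first identity reduces to
  \<open>\<Sum>\<^sub>s (-1)^s C(q, s) C(q + z - s, K - s) = C(z, K)\<close> for q = |T - U|, z = |S \<inter> T|, K = k - m
  (note b = m + q + z). The second identity follows from the first because \<open>\<Phi>\<^sub>0\<close> is the
  identity.
\<close>

lemma sum_by_fibers:
  assumes "finite I" "finite J" "f ` I \<subseteq> J"
  shows "(\<Sum>i\<in>I. g i) = (\<Sum>j\<in>J. \<Sum>i\<in>I. if f i = j then g i else 0)"
  using sum.group[OF assms, of g] assms(1) by (simp add: sum.inter_filter)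

lemma sum_supported_on_inj_image:
  assumes "finite I" "g ` Z \<subseteq> I" "inj_on g Z"
    and "\<And>p. p \<in> I \<Longrightarrow> F p \<noteq> 0 \<Longrightarrow> p \<in> g ` Z"
    and "\<And>z. z \<in> Z \<Longrightarrow> F (g z) = c"
  shows "sum F I = of_nat (card Z) * c"
proof -
  have "sum F I = sum F (g ` Z)"
    by (rule sum.mono_neutral_right) (use assms in blast)+
  also have "\<dots> = sum (F \<circ> g) Z"
    by (rule sum.reindex[OF assms(3)])
  also have "\<dots> = of_nat (card Z) * c"
    using assms(5) by simp
  finally show ?thesis .
qed

lemma card_eq_Un3_disjoint:
  assumes "X = A \<union> B \<union> C" "finite X" "A \<inter> B = {}" "A \<inter> C = {}" "B \<inter> C = {}"
  shows "card X = card A + card B + card C"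
  using assms by (simp add: card_Un_disjoint Int_Un_distrib2)

lemma sum_alternating_binomial_convolution:
  "(\<Sum>s=0..K. (-1) ^ s * of_nat (q choose s) * of_nat ((q + z - s) choose (K - s)))
     = (of_nat (z choose K) :: 'a::comm_ring_1)"
proof (induction q arbitrary: z K)
  case 0
  have "(\<Sum>s=0..K. (-1) ^ s * of_nat (0 choose s) * of_nat ((0 + z - s) choose (K - s)))
      = (\<Sum>s=0..K. if s = 0 then of_nat (z choose K) else (0::'a))"
    by (rule sum.cong) (auto simp: binomial_eq_0)
  then show ?case
    by simp
next
  case (Suc q)
  show ?case
  proof (cases K)
    case 0
    then show ?thesis
      by simp
  next
    case K: (Suc K')
    let ?tail = "\<lambda>s. (-1) ^ s * of_nat (q choose Suc s) * of_nat ((q + z - s) choose (K' - s)) :: 'a"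
    have pascal: "(\<Sum>s=0..K. (-1) ^ s * of_nat (Suc q choose s) * of_nat ((Suc q + z - s) choose (K - s)))
        = of_nat ((Suc q + z) choose K)
          - (\<Sum>s=0..K'. (-1) ^ s * of_nat (q choose s) * of_nat ((q + z - s) choose (K' - s)))
          - (\<Sum>s=0..K'. ?tail s)"
      unfolding K sum.atLeast0_atMost_Suc_shift
      by (simp add: algebra_simps sum.distrib sum_subtractf sum_negf)
    have shifted: "of_nat ((Suc q + z) choose K) - (\<Sum>s=0..K'. ?tail s)
        = (\<Sum>s=0..K. (-1) ^ s * of_nat (q choose s) * of_nat ((q + Suc z - s) choose (K - s)) :: 'a)"
      unfolding K sum.atLeast0_atMost_Suc_shift by (simp add: sum_negf)
    have "(\<Sum>s=0..K. (-1) ^ s * of_nat (Suc q choose s) * of_nat ((Suc q + z - s) choose (K - s)))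
        = (\<Sum>s=0..K. (-1) ^ s * of_nat (q choose s) * of_nat ((q + Suc z - s) choose (K - s)))
          - (\<Sum>s=0..K'. (-1) ^ s * of_nat (q choose s) * of_nat ((q + z - s) choose (K' - s)) :: 'a)"
      unfolding pascal shifted[symmetric] by (simp add: algebra_simps)
    also have "\<dots> = of_nat (Suc z choose K) - of_nat (z choose K')"
      by (simp only: Suc.IH)
    finally show ?thesis
      by (simp add: K)
  qed
qed

section \<open>Signs of products of basis vectors\<close>

definition inversions :: "nat set \<Rightarrow> nat set \<Rightarrow> nat" where
  "inversions S T = card {(i, j). i \<in> S \<and> j \<in> T \<and> j < i}"

lemma wsgn_eq_inversions: "wsgn S T = (if S \<inter> T = {} then (-1) ^ inversions S T else 0)"
  by (simp add: wsgn_def inversions_def)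

lemma wsgn_nonzero_imp_disjoint: "wsgn S T \<noteq> 0 \<Longrightarrow> S \<inter> T = {}"
  by (auto simp: wsgn_eq_inversions split: if_splits)

lemma inversions_empty [simp]: "inversions {} B = 0" "inversions A {} = 0"
  by (simp_all add: inversions_def)

lemma finite_inversion_pairs:
  "finite A \<Longrightarrow> finite B \<Longrightarrow> finite {(i, j). i \<in> A \<and> j \<in> B \<and> j < i}"
  by (rule finite_subset[of _ "A \<times> B"]) auto

lemma inversions_Un_left:
  assumes "finite A" "finite B" "finite C" "A \<inter> B = {}"
  shows "inversions (A \<union> B) C = inversions A C + inversions B C"
proof -
  have "{(i, j). i \<in> A \<union> B \<and> j \<in> C \<and> j < i} =
      {(i, j). i \<in> A \<and> j \<in> C \<and> j < i} \<union> {(i, j). i \<in> B \<and> j \<in> C \<and> j < i}"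
    by blast
  then show ?thesis
    unfolding inversions_def using assms
    by (simp add: card_Un_disjoint finite_inversion_pairs disjoint_iff)
qed

lemma inversions_Un_right:
  assumes "finite A" "finite B" "finite C" "B \<inter> C = {}"
  shows "inversions A (B \<union> C) = inversions A B + inversions A C"
proof -
  have "{(i, j). i \<in> A \<and> j \<in> B \<union> C \<and> j < i} =
      {(i, j). i \<in> A \<and> j \<in> B \<and> j < i} \<union> {(i, j). i \<in> A \<and> j \<in> C \<and> j < i}"
    by blast
  then show ?thesis
    unfolding inversions_def using assms
    by (simp add: card_Un_disjoint finite_inversion_pairs disjoint_iff)
qed

lemma inversions_add_inversions_swap:
  assumes "finite A" "finite B" "A \<inter> B = {}"
  shows "inversions A B + inversions B A = card A * card B"
proof -
  let ?below = "{(i, j). i \<in> A \<and> j \<in> B \<and> j < i}"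
  let ?above = "{(i, j). i \<in> A \<and> j \<in> B \<and> i < j}"
  have "inversions B A = card (prod.swap ` {(i, j). i \<in> B \<and> j \<in> A \<and> j < i})"
    unfolding inversions_def by (simp add: card_image)
  also have "prod.swap ` {(i, j). i \<in> B \<and> j \<in> A \<and> j < i} = ?above"
    by (auto simp: image_iff)
  finally have "inversions B A = card ?above" .
  moreover have "finite ?above"
    by (rule finite_subset[of _ "A \<times> B"]) (use assms in auto)
  ultimately have "inversions A B + inversions B A = card (?below \<union> ?above)"
    unfolding inversions_def using assms
    by (subst card_Un_disjoint) (auto simp: finite_inversion_pairs)
  also have "?below \<union> ?above = A \<times> B"
    using assms(3) by auto
  finally show ?thesis
    by (simp add: card_cartesian_product)
qed

definition admissible :: "nat \<Rightarrow> nat \<Rightarrow> nat set \<Rightarrow> nat set \<Rightarrow> nat set \<Rightarrow> nat set \<Rightarrow> bool" where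
  "admissible a b S T U V \<longleftrightarrow> S \<union> T = U \<union> V \<and> S \<inter> T = U \<inter> V \<and> card U = a \<and> card V = b"

definition transfer_sign :: "nat set \<Rightarrow> nat set \<Rightarrow> nat set \<Rightarrow> nat set \<Rightarrow> 'a::ring_1" where
  "transfer_sign S T U V = (-1) ^ (inversions (S - V) (T - V) + inversions (S - U) (T - U)
      + inversions (S - V) (S - U) + inversions (T - V) (T - U))"

lemma card_transfer_parts:
  assumes "S \<union> T = U \<union> V" "S \<inter> T = U \<inter> V" "finite S" "finite T"
  shows "card S = card (S - V) + card (S - U) + card (S \<inter> T)"
    and "card T = card (T - V) + card (T - U) + card (S \<inter> T)"
    and "card U = card (S - V) + card (T - V) + card (S \<inter> T)"
    and "card V = card (S - U) + card (T - U) + card (S \<inter> T)"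
proof -
  have finite: "finite U" "finite V"
    using assms(1,3,4) by (metis finite_Un)+
  show "card S = card (S - V) + card (S - U) + card (S \<inter> T)"
    by (rule card_eq_Un3_disjoint) (use assms finite in blast)+
  show "card T = card (T - V) + card (T - U) + card (S \<inter> T)"
    by (rule card_eq_Un3_disjoint) (use assms finite in blast)+
  show "card U = card (S - V) + card (T - V) + card (S \<inter> T)"
    by (rule card_eq_Un3_disjoint) (use assms finite in blast)+
  show "card V = card (S - U) + card (T - U) + card (S \<inter> T)"
    by (rule card_eq_Un3_disjoint) (use assms finite in blast)+
qed

lemma admissible_card_Diff_eq:
  assumes "admissible a b S T U V" "finite S" "finite T" "card S = a"
  shows "card (S - U) = card (T - V)"
  using card_transfer_parts[of S T U V] assms unfolding admissible_def by linarith

section \<open>The coefficients of \<open>\<phi>\<^sub>k\<close>\<close>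

text \<open>
  \<open>phi_term a b k S T U V (S1, A, S2, B)\<close> is the contribution of the summand
  e_S1 \<otimes> e_S2 \<otimes> e_A \<otimes> e_B of \<open>\<Delta>(e_S) \<otimes> \<Delta>(e_T)\<close> to the coefficient of e_U \<otimes> e_V.
\<close>

definition phi_term :: "nat \<Rightarrow> nat \<Rightarrow> nat \<Rightarrow> nat set \<Rightarrow> nat set \<Rightarrow> nat set \<Rightarrow> nat set
    \<Rightarrow> nat set \<times> nat set \<times> nat set \<times> nat set \<Rightarrow> 'a::field" where
  "phi_term a b k S T U V = (\<lambda>(S1, A, S2, B).
     if S1 \<union> S2 = S \<and> A \<union> B = T \<and> S1 \<union> A = U \<and> S2 \<union> B = V
        \<and> card S1 = a - k \<and> card S2 = k \<and> card A = k \<and> card B = b - k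
     then wsgn S1 S2 * wsgn A B * wsgn S1 A * wsgn S2 B else 0)"

definition phi_coeff :: "nat \<Rightarrow> nat \<Rightarrow> nat \<Rightarrow> nat \<Rightarrow> nat set \<Rightarrow> nat set \<Rightarrow> nat set \<Rightarrow> nat set \<Rightarrow> 'a::field" where
  "phi_coeff n a b k S T U V =
     sum (phi_term a b k S T U V) (Pow {..<n} \<times> Pow {..<n} \<times> Pow {..<n} \<times> Pow {..<n})"

lemma phi_expand:
  "phi n a b k x U V = (\<Sum>S\<in>Pow {..<n}. \<Sum>T\<in>Pow {..<n}. x S T * phi_coeff n a b k S T U V)"
proof -
  let ?P = "Pow {..<n}"
  have "phi n a b k x U V = (\<Sum>(S1, A, S2, B) \<in> ?P \<times> ?P \<times> ?P \<times> ?P.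
     if S1 \<union> A = U \<and> S2 \<union> B = V \<and> card S1 = a - k \<and> card S2 = k \<and> card A = k \<and> card B = b - k
     then wsgn S1 S2 * wsgn A B * wsgn S1 A * wsgn S2 B * x (S1 \<union> S2) (A \<union> B) else 0)"
    unfolding phi_def mult_def comult_def sum.cartesian_product[symmetric]
    by (auto simp: sum_distrib_left intro!: sum.cong)
  also have "\<dots> = (\<Sum>(S, T) \<in> ?P \<times> ?P. x S T * phi_coeff n a b k S T U V)"
    by (subst sum_by_fibers[where f = "\<lambda>(S1, A, S2, B). (S1 \<union> S2, A \<union> B)" and J = "?P \<times> ?P"])
       (auto simp: phi_coeff_def phi_term_def sum_distrib_left intro!: sum.cong)
  finally show ?thesis
    by (simp add: sum.cartesian_product)
qed

text \<open>A contributing term is determined by \<open>Z = S2 \<inter> A\<close>, a subset of \<open>S \<inter> T\<close>.\<close>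

definition phi_split :: "nat set \<Rightarrow> nat set \<Rightarrow> nat set \<Rightarrow> nat set \<Rightarrow> nat set
    \<Rightarrow> nat set \<times> nat set \<times> nat set \<times> nat set" where
  "phi_split S T U V Z = ((S - V) \<union> (S \<inter> T - Z), (T - V) \<union> Z, (S - U) \<union> Z, (T - U) \<union> (S \<inter> T - Z))"

lemma phi_split_eqs:
  assumes "S \<union> T = U \<union> V" "S \<inter> T = U \<inter> V" "Z \<subseteq> S \<inter> T"
    and "phi_split S T U V Z = (S1, A, S2, B)"
  shows "S1 \<union> S2 = S" "A \<union> B = T" "S1 \<union> A = U" "S2 \<union> B = V"
    "S1 = (S - V) \<union> (S \<inter> T - Z)" "A = (T - V) \<union> Z" "S2 = (S - U) \<union> Z" "B = (T - U) \<union> (S \<inter> T - Z)"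
  using assms unfolding phi_split_def by blast+

lemma inj_on_phi_split:
  assumes "S \<inter> T = U \<inter> V"
  shows "inj_on (phi_split S T U V) (Pow (S \<inter> T))"
proof (rule inj_onI)
  fix Z1 Z2
  assume "Z1 \<in> Pow (S \<inter> T)" "Z2 \<in> Pow (S \<inter> T)" "phi_split S T U V Z1 = phi_split S T U V Z2"
  then have "(T - V) \<union> Z1 = (T - V) \<union> Z2" "Z1 \<subseteq> S \<inter> T" "Z2 \<subseteq> S \<inter> T"
    unfolding phi_split_def by auto
  then show "Z1 = Z2"
    using assms by blast
qed

lemma card_phi_split:
  assumes "S \<union> T = U \<union> V" "S \<inter> T = U \<inter> V" "finite S" "finite T" "Z \<subseteq> S \<inter> T"
    and "phi_split S T U V Z = (S1, A, S2, B)"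
  shows "card S1 = card (S - V) + (card (S \<inter> T) - card Z)" "card A = card (T - V) + card Z"
    "card S2 = card (S - U) + card Z" "card B = card (T - U) + (card (S \<inter> T) - card Z)"
proof -
  have finite: "finite Z" "finite (S \<inter> T)"
    using assms(3,5) by (auto intro: finite_subset)
  note parts = phi_split_eqs[OF assms(1,2,5,6)]
  have "card S1 = card (S - V) + card (S \<inter> T - Z)"
    unfolding parts(5) by (rule card_Un_disjoint) (use assms finite in auto)
  then show "card S1 = card (S - V) + (card (S \<inter> T) - card Z)"
    using finite assms(5) by (simp add: card_Diff_subset)
  show "card A = card (T - V) + card Z"
    unfolding parts(6) by (rule card_Un_disjoint) (use assms finite in auto)
  show "card S2 = card (S - U) + card Z"
    unfolding parts(7) by (rule card_Un_disjoint) (use assms finite in auto)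
  have "card B = card (T - U) + card (S \<inter> T - Z)"
    unfolding parts(8) by (rule card_Un_disjoint) (use assms finite in auto)
  then show "card B = card (T - U) + (card (S \<inter> T) - card Z)"
    using finite assms(5) by (simp add: card_Diff_subset)
qed

lemma phi_split_sign:
  assumes "S \<union> T = U \<union> V" "S \<inter> T = U \<inter> V" "finite S" "finite T"
    and "card (S - U) = card (T - V)" "Z \<subseteq> S \<inter> T"
    and "phi_split S T U V Z = (S1, A, S2, B)"
  shows "wsgn S1 S2 * wsgn A B * wsgn S1 A * wsgn S2 B = (transfer_sign S T U V :: 'a::field)"
proof -
  define R X Y Q Z' where "R = S - V" "X = S - U" "Y = T - V" "Q = T - U" "Z' = S \<inter> T - Z"
  have parts: "S1 = R \<union> Z'" "S2 = X \<union> Z" "A = Y \<union> Z" "B = Q \<union> Z'"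
    using phi_split_eqs[OF assms(1,2,6,7)] unfolding R_X_Y_Q_Z'_def by simp_all
  have finite: "finite R" "finite X" "finite Y" "finite Q" "finite Z" "finite Z'"
    unfolding R_X_Y_Q_Z'_def using assms(3,4,6) by (auto intro: finite_subset)
  have disjoint: "R \<inter> X = {}" "R \<inter> Y = {}" "R \<inter> Q = {}" "R \<inter> Z = {}" "R \<inter> Z' = {}"
    "X \<inter> Y = {}" "X \<inter> Q = {}" "X \<inter> Z = {}" "X \<inter> Z' = {}" "Y \<inter> Q = {}" "Y \<inter> Z = {}"
    "Y \<inter> Z' = {}" "Q \<inter> Z = {}" "Q \<inter> Z' = {}" "Z \<inter> Z' = {}"
    unfolding R_X_Y_Q_Z'_def using assms(1,2,6) by blast+
  have swap: "inversions Z' Y + inversions Y Z' = card X * card Z'"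
    "inversions X Z' + inversions Z' X = card X * card Z'"
    using inversions_add_inversions_swap finite disjoint assms(5) unfolding R_X_Y_Q_Z'_def
    by (simp_all add: Int_commute mult.commute)
  let ?sum = "inversions S1 S2 + inversions A B + inversions S1 A + inversions S2 B"
  let ?E = "inversions R Y + inversions X Q + inversions R X + inversions Y Q"
  let ?K = "inversions R Z + inversions Z' Z + inversions Z Q + inversions Z Z'"
  have "inversions S1 S2 = inversions R X + inversions R Z + inversions Z' X + inversions Z' Z"
    "inversions A B = inversions Y Q + inversions Y Z' + inversions Z Q + inversions Z Z'"
    "inversions S1 A = inversions R Y + inversions R Z + inversions Z' Y + inversions Z' Z"
    "inversions S2 B = inversions X Q + inversions X Z' + inversions Z Q + inversions Z Z'"
    unfolding parts using finite disjoint
    by (simp_all add: inversions_Un_left inversions_Un_right)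
  then have "?sum = ?E + 2 * ?K + (inversions Z' Y + inversions Y Z') + (inversions X Z' + inversions Z' X)"
    by simp
  also have "\<dots> = ?E + 2 * (?K + card X * card Z')"
    unfolding swap by simp
  finally have exponent: "?sum = ?E + 2 * (?K + card X * card Z')" .
  have "S1 \<inter> S2 = {}" "A \<inter> B = {}" "S1 \<inter> A = {}" "S2 \<inter> B = {}"
    unfolding parts using disjoint by (auto simp: set_eq_iff)
  then have "wsgn S1 S2 * wsgn A B * wsgn S1 A * wsgn S2 B = (-1::'a) ^ ?sum"
    by (simp add: wsgn_eq_inversions power_add)
  also have "\<dots> = (-1) ^ ?E"
    unfolding exponent by (simp only: power_add power_mult) simp
  also have "\<dots> = transfer_sign S T U V"
    by (simp add: transfer_sign_def R_X_Y_Q_Z'_def)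
  finally show ?thesis .
qed

lemma phi_term_nonzero:
  assumes "finite S" "finite T" "k \<le> b" "b \<le> a" "phi_term a b k S T U V p \<noteq> (0::'a::field)"
  shows "admissible a b S T U V" "card (S - U) \<le> k"
    "p \<in> phi_split S T U V ` {Z. Z \<subseteq> S \<inter> T \<and> card Z = k - card (S - U)}"
proof -
  obtain S1 A S2 B where p: "p = (S1, A, S2, B)"
    by (cases p)
  have terms: "S1 \<union> S2 = S" "A \<union> B = T" "S1 \<union> A = U" "S2 \<union> B = V"
      "card S1 = a - k" "card S2 = k" "card A = k" "card B = b - k"
    and "wsgn S1 S2 * wsgn A B * wsgn S1 A * wsgn S2 B \<noteq> (0::'a)"
    using assms(5) by (auto simp: phi_term_def p split: if_splits)
  then have disjoint: "S1 \<inter> S2 = {}" "A \<inter> B = {}" "S1 \<inter> A = {}" "S2 \<inter> B = {}"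
    by (auto dest!: wsgn_nonzero_imp_disjoint)
  then have sets: "S \<union> T = U \<union> V" "S \<inter> T = U \<inter> V" "p = phi_split S T U V (S2 \<inter> A)"
    "S2 \<inter> A \<subseteq> S \<inter> T" "S2 = (S - U) \<union> (S2 \<inter> A)" "(S - U) \<inter> (S2 \<inter> A) = {}"
    using terms(1-4) unfolding p phi_split_def by blast+
  have "card U = card S1 + card A" "card V = card S2 + card B"
    using terms(1-4) disjoint assms(1,2) by (metis card_Un_disjoint finite_Un)+
  then show "admissible a b S T U V"
    using sets(1,2) terms(5-8) assms(3,4) unfolding admissible_def by simp
  have "card S2 = card (S - U) + card (S2 \<inter> A)"
    using sets(5,6) terms(1) assms(1) by (metis card_Un_disjoint finite_Un)
  then show "card (S - U) \<le> k" "p \<in> phi_split S T U V ` {Z. Z \<subseteq> S \<inter> T \<and> card Z = k - card (S - U)}"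
    using sets(3,4) terms(6) by auto
qed

lemma phi_term_phi_split:
  assumes "admissible a b S T U V" "finite S" "finite T" "card S = a" "card T = b"
    and "Z \<subseteq> S \<inter> T" "card Z = k - card (S - U)" "card (S - U) \<le> k"
  shows "phi_term a b k S T U V (phi_split S T U V Z) = (transfer_sign S T U V :: 'a::field)"
proof -
  obtain S1 A S2 B where tuple: "phi_split S T U V Z = (S1, A, S2, B)"
    by (cases "phi_split S T U V Z")
  have adm: "S \<union> T = U \<union> V" "S \<inter> T = U \<inter> V" "card U = a" "card V = b"
    using assms(1) unfolding admissible_def by auto
  have "card Z \<le> card (S \<inter> T)"
    using assms(2,6) by (simp add: card_mono)
  then have "card S1 = a - k" "card S2 = k" "card A = k" "card B = b - k"
    using card_phi_split[OF adm(1,2) assms(2,3,6) tuple] card_transfer_parts[OF adm(1,2) assms(2,3)]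
      admissible_card_Diff_eq[OF assms(1-4)] adm(3,4) assms(4,5,7,8)
    by linarith+
  then show ?thesis
    using phi_split_eqs[OF adm(1,2) assms(6) tuple]
      phi_split_sign[OF adm(1,2) assms(2,3) admissible_card_Diff_eq[OF assms(1-4)] assms(6) tuple]
    unfolding phi_term_def tuple by simp
qed

lemma phi_coeff_eq:
  assumes "S \<subseteq> {..<n}" "T \<subseteq> {..<n}" "card S = a" "card T = b" "k \<le> b" "b \<le> a"
  shows "phi_coeff n a b k S T U V =
    (if admissible a b S T U V \<and> card (S - U) \<le> k
     then transfer_sign S T U V * of_nat (card (S \<inter> T) choose (k - card (S - U))) else 0)"
proof -
  let ?P = "Pow {..<n}"
  define Zs where "Zs = {Z. Z \<subseteq> S \<inter> T \<and> card Z = k - card (S - U)}"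
  have finite: "finite S" "finite T"
    using assms(1,2) by (auto intro: finite_subset)
  note nonzero = phi_term_nonzero[OF finite assms(5,6)]
  show ?thesis
  proof (cases "admissible a b S T U V \<and> card (S - U) \<le> k")
    case True
    have "phi_coeff n a b k S T U V = of_nat (card Zs) * transfer_sign S T U V"
      unfolding phi_coeff_def
    proof (rule sum_supported_on_inj_image)
      show "phi_split S T U V ` Zs \<subseteq> ?P \<times> ?P \<times> ?P \<times> ?P"
        using assms(1,2) unfolding phi_split_def Zs_def by auto
      show "inj_on (phi_split S T U V) Zs"
        by (rule inj_on_subset[OF inj_on_phi_split]) (use True in \<open>auto simp: admissible_def Zs_def\<close>)
      show "p \<in> phi_split S T U V ` Zs" if "phi_term a b k S T U V p \<noteq> 0" for p
        using nonzero(3)[OF that] unfolding Zs_def .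
      show "phi_term a b k S T U V (phi_split S T U V Z) = transfer_sign S T U V" if "Z \<in> Zs" for Z
        using True that unfolding Zs_def by (intro phi_term_phi_split[OF _ finite assms(3,4)]) auto
    qed simp
    moreover have "card Zs = card (S \<inter> T) choose (k - card (S - U))"
      unfolding Zs_def by (rule n_subsets) (use finite in auto)
    ultimately show ?thesis
      using True by (simp add: mult.commute)
  next
    case False
    then have "phi_coeff n a b k S T U V = 0"
      unfolding phi_coeff_def by (intro sum.neutral) (use nonzero in blast)
    then show ?thesis
      unfolding if_not_P[OF False] .
  qed
qed

section \<open>The coefficients of \<open>\<Phi>\<^sub>t\<close>\<close>

text \<open>
  \<open>Phi_term a b t S T U V (A', W, A)\<close> is the contribution of the summand e_A \<otimes> e_W of
  \<open>\<Delta>(e_T)\<close>, followed by the summand e_U \<otimes> e_A' of \<open>\<Delta>(e_S \<and> e_A)\<close>, to the coefficient of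
  e_U \<otimes> e_V.
\<close>

definition Phi_term :: "nat \<Rightarrow> nat \<Rightarrow> nat \<Rightarrow> nat set \<Rightarrow> nat set \<Rightarrow> nat set \<Rightarrow> nat set
    \<Rightarrow> nat set \<times> nat set \<times> nat set \<Rightarrow> 'a::field" where
  "Phi_term a b t S T U V = (\<lambda>(A', W, A).
     if A \<union> W = T \<and> A' \<union> W = V \<and> S \<union> A = U \<union> A'
        \<and> card U = a \<and> card A' = t \<and> card A = t \<and> card W = b - t
     then wsgn A' W * wsgn U A' * wsgn S A * wsgn A W else 0)"

definition Phi_coeff :: "nat \<Rightarrow> nat \<Rightarrow> nat \<Rightarrow> nat \<Rightarrow> nat set \<Rightarrow> nat set \<Rightarrow> nat set \<Rightarrow> nat set \<Rightarrow> 'a::field" where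
  "Phi_coeff n a b t S T U V = sum (Phi_term a b t S T U V) (Pow {..<n} \<times> Pow {..<n} \<times> Pow {..<n})"

lemma Phi_expand:
  "Phi n a b t x U V = (\<Sum>S\<in>Pow {..<n}. \<Sum>T\<in>Pow {..<n}. x S T * Phi_coeff n a b t S T U V)"
proof -
  let ?P = "Pow {..<n}"
  let ?term = "\<lambda>S (A', W, A). if A' \<union> W = V \<and> S \<union> A = U \<union> A'
        \<and> card U = a \<and> card A' = t \<and> card A = t \<and> card W = b - t
     then wsgn A' W * wsgn U A' * wsgn S A * wsgn A W * x S (A \<union> W) else 0"
  have "Phi n a b t x U V = (\<Sum>A'\<in>?P. \<Sum>W\<in>?P. \<Sum>S\<in>?P. \<Sum>A\<in>?P. ?term S (A', W, A))"
    unfolding Phi_def theta_def delta_def mult_def comult_def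
    by (auto simp: sum_distrib_left intro!: sum.cong)
  also have "\<dots> = (\<Sum>S\<in>?P. \<Sum>p\<in>?P \<times> ?P \<times> ?P. ?term S p)"
    unfolding sum.cartesian_product[symmetric] prod.case
    by (rule trans[OF sum.cong[OF refl sum.swap] sum.swap])
  also have "\<dots> = (\<Sum>S\<in>?P. \<Sum>T\<in>?P. x S T * Phi_coeff n a b t S T U V)"
    by (intro sum.cong refl, subst sum_by_fibers[where f = "\<lambda>(A', W, A). A \<union> W" and J = "?P"])
       (auto simp: Phi_coeff_def Phi_term_def sum_distrib_left intro!: sum.cong)
  finally show ?thesis .
qed

text \<open>A contributing term is determined by \<open>Q = A' \<inter> (T - U)\<close>, a subset of \<open>T - U\<close>.\<close>

definition Phi_split :: "nat set \<Rightarrow> nat set \<Rightarrow> nat set \<Rightarrow> nat set \<Rightarrow> nat set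
    \<Rightarrow> nat set \<times> nat set \<times> nat set" where
  "Phi_split S T U V Q = ((S - U) \<union> Q, (T - U - Q) \<union> (S \<inter> T), (T - V) \<union> Q)"

lemma Phi_split_eqs:
  assumes "S \<union> T = U \<union> V" "S \<inter> T = U \<inter> V" "Q \<subseteq> T - U"
    and "Phi_split S T U V Q = (A', W, A)"
  shows "A \<union> W = T" "A' \<union> W = V" "S \<union> A = U \<union> A'"
    "A' = (S - U) \<union> Q" "W = (T - U - Q) \<union> (S \<inter> T)" "A = (T - V) \<union> Q"
  using assms unfolding Phi_split_def by blast+

lemma inj_on_Phi_split:
  assumes "S \<inter> T = U \<inter> V"
  shows "inj_on (Phi_split S T U V) (Pow (T - U))"
proof (rule inj_onI)
  fix Q1 Q2
  assume "Q1 \<in> Pow (T - U)" "Q2 \<in> Pow (T - U)" "Phi_split S T U V Q1 = Phi_split S T U V Q2"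
  then have "(S - U) \<union> Q1 = (S - U) \<union> Q2" "Q1 \<subseteq> T - U" "Q2 \<subseteq> T - U"
    unfolding Phi_split_def by auto
  then show "Q1 = Q2"
    using assms by blast
qed

lemma card_Phi_split:
  assumes "S \<union> T = U \<union> V" "S \<inter> T = U \<inter> V" "finite S" "finite T" "Q \<subseteq> T - U"
    and "Phi_split S T U V Q = (A', W, A)"
  shows "card A' = card (S - U) + card Q" "card W = (card (T - U) - card Q) + card (S \<inter> T)"
    "card A = card (T - V) + card Q"
proof -
  have finite: "finite Q" "finite (T - U)" "finite (S \<inter> T)"
    using assms(3,4,5) by (auto intro: finite_subset)
  note parts = Phi_split_eqs[OF assms(1,2,5,6)]
  show "card A' = card (S - U) + card Q"
    unfolding parts(4) by (rule card_Un_disjoint) (use assms finite in auto)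
  have "card W = card (T - U - Q) + card (S \<inter> T)"
    unfolding parts(5) by (rule card_Un_disjoint) (use assms finite in auto)
  then show "card W = (card (T - U) - card Q) + card (S \<inter> T)"
    using finite assms(5) by (simp add: card_Diff_subset)
  show "card A = card (T - V) + card Q"
    unfolding parts(6) by (rule card_Un_disjoint) (use assms finite in auto)
qed

lemma Phi_split_sign:
  assumes "S \<union> T = U \<union> V" "S \<inter> T = U \<inter> V" "finite S" "finite T"
    and "card (S - U) = card (T - V)" "Q1 \<subseteq> T - U"
    and "Phi_split S T U V Q1 = (A', W, A)"
  shows "wsgn A' W * wsgn U A' * wsgn S A * wsgn A W
    = (-1) ^ card (S - U) * (transfer_sign S T U V :: 'a::field)"
proof -
  define R X Y Q Q0 Z where "R = S - V" "X = S - U" "Y = T - V" "Q = T - U" "Q0 = T - U - Q1"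
    "Z = S \<inter> T"
  have split_parts: "A' = X \<union> Q1" "W = Q0 \<union> Z" "A = Y \<union> Q1"
    using Phi_split_eqs[OF assms(1,2,6,7)] unfolding R_X_Y_Q_Q0_Z_def by simp_all
  have set_parts: "U = R \<union> Y \<union> Z" "S = R \<union> X \<union> Z" "Q = Q0 \<union> Q1"
    unfolding R_X_Y_Q_Q0_Z_def using assms(1,2,6) by blast+
  have finite: "finite R" "finite X" "finite Y" "finite Q0" "finite Q1" "finite Z"
    unfolding R_X_Y_Q_Q0_Z_def using assms(3,4,6) by (auto intro: finite_subset)
  have disjoint: "R \<inter> X = {}" "R \<inter> Y = {}" "R \<inter> Q0 = {}" "R \<inter> Q1 = {}" "R \<inter> Z = {}"
    "X \<inter> Y = {}" "X \<inter> Q0 = {}" "X \<inter> Q1 = {}" "X \<inter> Z = {}" "Y \<inter> Q0 = {}" "Y \<inter> Q1 = {}"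
    "Y \<inter> Z = {}" "Q0 \<inter> Q1 = {}" "Q0 \<inter> Z = {}" "Q1 \<inter> Z = {}"
    unfolding R_X_Y_Q_Q0_Z_def using assms(1,2,6) by blast+
  have swap: "inversions X Y + inversions Y X = card X * card X"
    "inversions X Z + inversions Z X = card X * card Z"
    "inversions Y Z + inversions Z Y = card X * card Z"
    using inversions_add_inversions_swap finite disjoint assms(5) unfolding R_X_Y_Q_Q0_Z_def
    by (simp_all add: Int_commute)
  let ?sum = "inversions A' W + inversions U A' + inversions S A + inversions A W"
  let ?E = "inversions R Y + inversions X Q + inversions R X + inversions Y Q"
  let ?K = "inversions Q1 Q0 + inversions Q1 Z + inversions R Q1 + inversions Z Q1"
  have "inversions A' W = inversions X Q0 + inversions X Z + inversions Q1 Q0 + inversions Q1 Z"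
    "inversions U A' = inversions R X + inversions R Q1 + inversions Y X + inversions Y Q1
       + inversions Z X + inversions Z Q1"
    "inversions S A = inversions R Y + inversions R Q1 + inversions X Y + inversions X Q1
       + inversions Z Y + inversions Z Q1"
    "inversions A W = inversions Y Q0 + inversions Y Z + inversions Q1 Q0 + inversions Q1 Z"
    "inversions X Q = inversions X Q0 + inversions X Q1"
    "inversions Y Q = inversions Y Q0 + inversions Y Q1"
    unfolding split_parts set_parts using finite disjoint
    by (simp_all add: inversions_Un_left inversions_Un_right Int_Un_distrib2)
  then have "?sum = ?E + 2 * ?K + (inversions X Y + inversions Y X) + (inversions X Z + inversions Z X)
      + (inversions Y Z + inversions Z Y)"
    by simp
  also have "\<dots> = ?E + card X * card X + 2 * (?K + card X * card Z)"
    unfolding swap by simp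
  finally have exponent: "?sum = ?E + card X * card X + 2 * (?K + card X * card Z)" .
  have "A' \<inter> W = {}" "U \<inter> A' = {}" "S \<inter> A = {}" "A \<inter> W = {}"
    unfolding split_parts set_parts using disjoint by (auto simp: set_eq_iff)
  then have "wsgn A' W * wsgn U A' * wsgn S A * wsgn A W = (-1::'a) ^ ?sum"
    by (simp add: wsgn_eq_inversions power_add)
  also have "\<dots> = (-1) ^ card X * (-1) ^ ?E"
    unfolding exponent by (simp only: power_add power_mult) (simp add: minus_one_power_iff)
  also have "\<dots> = (-1) ^ card (S - U) * transfer_sign S T U V"
    by (simp add: transfer_sign_def R_X_Y_Q_Q0_Z_def)
  finally show ?thesis .
qed

lemma Phi_term_nonzero:
  assumes "finite S" "finite T" "t \<le> b" "Phi_term a b t S T U V p \<noteq> (0::'a::field)"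
  shows "admissible a b S T U V" "card (S - U) \<le> t"
    "p \<in> Phi_split S T U V ` {Q. Q \<subseteq> T - U \<and> card Q = t - card (S - U)}"
proof -
  obtain A' W A where p: "p = (A', W, A)"
    by (cases p)
  have terms: "A \<union> W = T" "A' \<union> W = V" "S \<union> A = U \<union> A'"
      "card U = a" "card A' = t" "card A = t" "card W = b - t"
    and "wsgn A' W * wsgn U A' * wsgn S A * wsgn A W \<noteq> (0::'a)"
    using assms(4) by (auto simp: Phi_term_def p split: if_splits)
  then have disjoint: "A' \<inter> W = {}" "U \<inter> A' = {}" "S \<inter> A = {}" "A \<inter> W = {}"
    by (auto dest!: wsgn_nonzero_imp_disjoint)
  have sets: "S \<union> T = U \<union> V" "S \<inter> T = U \<inter> V" "A' = (S - U) \<union> (A' \<inter> (T - U))"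
    "(S - U) \<inter> (A' \<inter> (T - U)) = {}"
    using terms(1-3) disjoint by blast+
  have "W = (T - U - A' \<inter> (T - U)) \<union> (S \<inter> T)" "A = (T - V) \<union> (A' \<inter> (T - U))"
    using terms(1-3) disjoint by blast+
  with sets(3) have p_split: "p = Phi_split S T U V (A' \<inter> (T - U))"
    unfolding p Phi_split_def by simp
  have "A' \<subseteq> S \<union> T" "W \<subseteq> T"
    using terms(1,3) by blast+
  then have "card V = card A' + card W"
    using terms(2) disjoint(1) assms(1,2) by (metis card_Un_disjoint finite_Un finite_subset)
  then show "admissible a b S T U V"
    using sets(1,2) terms(4,5,7) assms(3) unfolding admissible_def by simp
  have "card A' = card (S - U) + card (A' \<inter> (T - U))"
    using sets(3,4) assms(1,2) by (metis card_Un_disjoint finite_Diff finite_Int)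
  then show "card (S - U) \<le> t" "p \<in> Phi_split S T U V ` {Q. Q \<subseteq> T - U \<and> card Q = t - card (S - U)}"
    using p_split terms(5) by auto
qed

lemma Phi_term_Phi_split:
  assumes "admissible a b S T U V" "finite S" "finite T" "card S = a" "card T = b"
    and "Q \<subseteq> T - U" "card Q = t - card (S - U)" "card (S - U) \<le> t" "t \<le> b"
  shows "Phi_term a b t S T U V (Phi_split S T U V Q)
    = (-1) ^ card (S - U) * (transfer_sign S T U V :: 'a::field)"
proof -
  obtain A' W A where tuple: "Phi_split S T U V Q = (A', W, A)"
    by (cases "Phi_split S T U V Q")
  have adm: "S \<union> T = U \<union> V" "S \<inter> T = U \<inter> V" "card U = a" "card V = b"
    using assms(1) unfolding admissible_def by auto
  have "card Q \<le> card (T - U)"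
    using assms(3,6) by (simp add: card_mono)
  then have "card A' = t" "card A = t" "card W = b - t"
    using card_Phi_split[OF adm(1,2) assms(2,3,6) tuple] card_transfer_parts[OF adm(1,2) assms(2,3)]
      admissible_card_Diff_eq[OF assms(1-4)] assms(5,7,8,9)
    by linarith+
  then show ?thesis
    using Phi_split_eqs[OF adm(1,2) assms(6) tuple] adm(3)
      Phi_split_sign[OF adm(1,2) assms(2,3) admissible_card_Diff_eq[OF assms(1-4)] assms(6) tuple]
    unfolding Phi_term_def tuple by simp
qed

lemma Phi_coeff_eq:
  assumes "S \<subseteq> {..<n}" "T \<subseteq> {..<n}" "card S = a" "card T = b" "t \<le> b"
  shows "Phi_coeff n a b t S T U V =
    (if admissible a b S T U V \<and> card (S - U) \<le> t
     then (-1) ^ card (S - U) * transfer_sign S T U V * of_nat (card (T - U) choose (t - card (S - U)))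
     else 0)"
proof -
  let ?P = "Pow {..<n}"
  define Qs where "Qs = {Q. Q \<subseteq> T - U \<and> card Q = t - card (S - U)}"
  have finite: "finite S" "finite T"
    using assms(1,2) by (auto intro: finite_subset)
  note nonzero = Phi_term_nonzero[OF finite assms(5)]
  show ?thesis
  proof (cases "admissible a b S T U V \<and> card (S - U) \<le> t")
    case True
    have "Phi_coeff n a b t S T U V = of_nat (card Qs) * ((-1) ^ card (S - U) * transfer_sign S T U V)"
      unfolding Phi_coeff_def
    proof (rule sum_supported_on_inj_image)
      show "Phi_split S T U V ` Qs \<subseteq> ?P \<times> ?P \<times> ?P"
        using assms(1,2) unfolding Phi_split_def Qs_def by auto
      show "inj_on (Phi_split S T U V) Qs"
        by (rule inj_on_subset[OF inj_on_Phi_split]) (use True in \<open>auto simp: admissible_def Qs_def\<close>)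
      show "p \<in> Phi_split S T U V ` Qs" if "Phi_term a b t S T U V p \<noteq> 0" for p
        using nonzero(3)[OF that] unfolding Qs_def .
      show "Phi_term a b t S T U V (Phi_split S T U V Q) = (-1) ^ card (S - U) * transfer_sign S T U V"
        if "Q \<in> Qs" for Q
        using True that assms(5) unfolding Qs_def by (intro Phi_term_Phi_split[OF _ finite assms(3,4)]) auto
    qed simp
    moreover have "card Qs = card (T - U) choose (t - card (S - U))"
      unfolding Qs_def by (rule n_subsets) (use finite in auto)
    ultimately show ?thesis
      using True by (simp add: mult.commute)
  next
    case False
    then have "Phi_coeff n a b t S T U V = 0"
      unfolding Phi_coeff_def by (intro sum.neutral) (use nonzero in blast)
    then show ?thesis
      unfolding if_not_P[OF False] .
  qed
qed

lemma phi_coeff_eq_alternating_sum: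
  assumes "S \<subseteq> {..<n}" "T \<subseteq> {..<n}" "card S = a" "card T = b" "k \<le> b" "b \<le> a"
  shows "phi_coeff n a b k S T U V
    = (\<Sum>t=0..k. (-1) ^ t * of_nat ((b - t) choose (k - t)) * (Phi_coeff n a b t S T U V :: 'a::field))"
proof (cases "admissible a b S T U V \<and> card (S - U) \<le> k")
  case True
  define m q z where "m = card (S - U)" "q = card (T - U)" "z = card (S \<inter> T)"
  define e :: 'a where "e = transfer_sign S T U V"
  have adm: "S \<union> T = U \<union> V" "S \<inter> T = U \<inter> V" "card U = a" and "m \<le> k"
    using True unfolding admissible_def m_q_z_def by auto
  have finite: "finite S" "finite T"
    using assms(1,2) by (auto intro: finite_subset)
  have b: "b = m + q + z"
    using card_transfer_parts[OF adm(1,2) finite] adm(3) assms(3,4) unfolding m_q_z_def by linarith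
  have "(\<Sum>t=0..k. (-1) ^ t * of_nat ((b - t) choose (k - t)) * Phi_coeff n a b t S T U V)
      = (\<Sum>t=0..k. if m \<le> t then (-1) ^ t * of_nat ((b - t) choose (k - t))
          * ((-1) ^ m * e * of_nat (q choose (t - m))) else 0)"
    using True assms by (intro sum.cong refl) (simp add: Phi_coeff_eq m_q_z_def e_def)
  also have "\<dots> = (\<Sum>t=m..k. (-1) ^ t * of_nat ((b - t) choose (k - t))
          * ((-1) ^ m * e * of_nat (q choose (t - m))))"
    by (rule sum.mono_neutral_cong_right) auto
  also have "\<dots> = (\<Sum>s=0..k-m. (-1) ^ (s + m) * of_nat ((b - (s + m)) choose (k - (s + m)))
          * ((-1) ^ m * e * of_nat (q choose s)))"
  proof -
    have "{m..k} = {0 + m..(k - m) + m}"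
      using \<open>m \<le> k\<close> by simp
    then show ?thesis
      by (simp only: sum.shift_bounds_cl_nat_ivl) simp
  qed
  also have "\<dots> = e * (\<Sum>s=0..k-m. (-1) ^ s * of_nat (q choose s) * of_nat ((q + z - s) choose (k - m - s)))"
    unfolding sum_distrib_left b
    by (intro sum.cong refl) (simp add: power_add algebra_simps)
  also have "\<dots> = e * of_nat (z choose (k - m))"
    by (simp only: sum_alternating_binomial_convolution)
  also have "\<dots> = phi_coeff n a b k S T U V"
    using True assms by (simp add: phi_coeff_eq m_q_z_def e_def)
  finally show ?thesis ..
next
  case False
  then have "Phi_coeff n a b t S T U V = (0::'a)" if "t \<le> k" for t
    using that assms by (auto simp: Phi_coeff_eq)
  moreover have "phi_coeff n a b k S T U V = (0::'a)"
    by (simp only: phi_coeff_eq[OF assms] if_not_P[OF False])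
  ultimately show ?thesis
    by simp
qed

lemma Phi_coeff_0:
  assumes "S \<subseteq> {..<n}" "T \<subseteq> {..<n}" "card S = a" "card T = b"
  shows "Phi_coeff n a b 0 S T U V = (if U = S \<and> V = T then 1 else 0)"
proof -
  have finite: "finite S" "finite T"
    using assms(1,2) by (auto intro: finite_subset)
  have "admissible a b S T U V \<and> card (S - U) \<le> 0 \<longleftrightarrow> U = S \<and> V = T"
  proof
    assume "admissible a b S T U V \<and> card (S - U) \<le> 0"
    then have adm: "S \<union> T = U \<union> V" "S \<inter> T = U \<inter> V" "card U = card S" and "S \<subseteq> U"
      using finite assms(3) unfolding admissible_def by auto
    moreover have "finite U"
      using adm(1) finite by (metis finite_Un)
    ultimately have "S = U"
      by (simp add: card_subset_eq)
    with adm(1,2) show "U = S \<and> V = T"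
      by blast
  qed (use assms in \<open>auto simp: admissible_def\<close>)
  then show ?thesis
    using assms by (auto simp: Phi_coeff_eq transfer_sign_def)
qed

lemma Phi_0_eq:
  assumes "in_tensor n a b x"
  shows "Phi n a b 0 x U V = x U V"
proof -
  let ?P = "Pow {..<n}"
  have "x S T * Phi_coeff n a b 0 S T U V = (if U = S \<and> V = T then x S T else 0)" for S T
  proof (cases "x S T = 0")
    case False
    then have "S \<subseteq> {..<n}" "T \<subseteq> {..<n}" "card S = a" "card T = b"
      using assms unfolding in_tensor_def by blast+
    then show ?thesis
      by (simp add: Phi_coeff_0)
  qed simp
  then have "Phi n a b 0 x U V = (\<Sum>S\<in>?P. \<Sum>T\<in>?P. if U = S \<and> V = T then x S T else 0)"
    by (simp add: Phi_expand)
  also have "\<dots> = (\<Sum>S\<in>?P. if U = S then \<Sum>T\<in>?P. if V = T then x S T else 0 else 0)"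
    by (intro sum.cong refl) auto
  also have "\<dots> = (if U \<in> ?P \<and> V \<in> ?P then x U V else 0)"
    by simp
  also have "\<dots> = x U V"
    using assms[unfolded in_tensor_def, rule_format, of U V] by auto
  finally show ?thesis .
qed

lemma phi_eq_alternating_sum_Phi:
  assumes "k \<le> b" "b \<le> a" "in_tensor n a b x"
  shows "phi n a b k x U V = (\<Sum>t=0..k. (-1) ^ t * of_nat ((b - t) choose (k - t)) * Phi n a b t x U V)"
proof -
  let ?P = "Pow {..<n}" and ?c = "\<lambda>t. (-1) ^ t * of_nat ((b - t) choose (k - t))"
  have "x S T * phi_coeff n a b k S T U V = (\<Sum>t=0..k. ?c t * (x S T * Phi_coeff n a b t S T U V))" for S T
  proof (cases "x S T = 0")
    case False
    then have "S \<subseteq> {..<n}" "T \<subseteq> {..<n}" "card S = a" "card T = b"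
      using assms(3) unfolding in_tensor_def by blast+
    then show ?thesis
      using assms(1,2) by (simp add: phi_coeff_eq_alternating_sum sum_distrib_left ac_simps)
  qed simp
  then have "phi n a b k x U V = (\<Sum>S\<in>?P. \<Sum>T\<in>?P. \<Sum>t=0..k. ?c t * (x S T * Phi_coeff n a b t S T U V))"
    by (simp add: phi_expand)
  also have "\<dots> = (\<Sum>t=0..k. \<Sum>S\<in>?P. \<Sum>T\<in>?P. ?c t * (x S T * Phi_coeff n a b t S T U V))"
    by (rule trans[OF sum.cong[OF refl sum.swap] sum.swap])
  also have "\<dots> = (\<Sum>t=0..k. ?c t * Phi n a b t x U V)"
    by (simp add: Phi_expand sum_distrib_left)
  finally show ?thesis .
qed

theorem lemma4p3:
  fixes x :: "nat set \<Rightarrow> nat set \<Rightarrow> 'a::field_char_0"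
    and n a b k :: nat
  assumes "0 < k" and "k \<le> b" and "b \<le> a"
    and "in_tensor n a b x"
  shows "(\<forall>U V. phi n a b k x U V =
            (\<Sum>t = 0..k. (-1) ^ t * of_nat ((b - t) choose (k - t)) * Phi n a b t x U V))
       \<and> (\<forall>U V. psi n a b k x U V =
            (\<Sum>t = 1..k. (-1) ^ (t - 1) * of_nat ((b - t) choose (k - t)) * Phi n a b t x U V))"
proof (intro conjI allI)
  fix U V
  let ?term = "\<lambda>t. (-1) ^ t * of_nat ((b - t) choose (k - t)) * Phi n a b t x U V"
  show phi_sum: "phi n a b k x U V = (\<Sum>t = 0..k. ?term t)"
    using phi_eq_alternating_sum_Phi[OF assms(2-4)] .
  have "(\<Sum>t = 0..k. ?term t) = of_nat (b choose k) * x U V + (\<Sum>t = 1..k. ?term t)"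
    using sum.atLeast_Suc_atMost[of 0 k ?term] Phi_0_eq[OF assms(4)] by simp
  moreover have "(-1) ^ (t - 1) = - ((-1) ^ t :: 'a)" if "t \<in> {1..k}" for t
    using that by (cases t) auto
  ultimately show "psi n a b k x U V
      = (\<Sum>t = 1..k. (-1) ^ (t - 1) * of_nat ((b - t) choose (k - t)) * Phi n a b t x U V)"
    unfolding psi_def phi_sum by (simp add: sum_negf)
qed

end
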